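(* For any continuous function $f\in C(\Omega)$: \[ |f|_{\infty} \;\geq\; \sup_{g\in L^2(\mu),\ |g|=1} \big| f\,(g\circ\sigma) \big| \;\geq\; |L f|_{\infty}. \] Furthermore, if $f\in C(\Omega)$ does not depend on the first coordinate (that is, if $f$ is $\sigma^{-1}(\mathfrak{B})$-measurable, where $\mathfrak{B}$ is the Borel sigma-algebra of $\Omega$), then both inequalities in the display above are equalities.
   Context: Let $\Omega=\{0,1\}^{\mathbb{N}}$ with the shift map $\sigma$, and let $\mu$ be the measure of maximal entropy for $\sigma$. For $x\in\Omega$ and $a\in\{0,1\}$, $ax$ denotes the sequence obtained by concatenating the symbol $a$ to the left of $x$. The Ruelle operator $L: L^2(\mu)\to L^2(\mu)$ is given by $L(g)(x)=\frac{1}{2}\big(g(0x)+g(1x)\big)$, and the Koopman operator $K=L^{\dagger}$ is given by $K(g)=g\circ\sigma$. Here $|\cdot|$ denotes the $L^2(\mu)$-norm and $|\cdot|_{\infty}$ the supremum norm; $f$ denotes a continuous real function and $g$ a square-integrable function. *)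

theory Defs
  imports "HOL-Probability.Probability"
begin

text \<open>The full shift space Omega = {0,1}^N is modelled as the type nat => bool,
  with symbol 0 encoded as False and symbol 1 encoded as True.\<close>

type_synonym omega = "nat \<Rightarrow> bool"

definition Omega_top :: "omega topology" where
  "Omega_top = product_topology (\<lambda>_. discrete_topology UNIV) UNIV"

definition cont_Omega :: "(omega \<Rightarrow> real) \<Rightarrow> bool" where
  "cont_Omega f \<longleftrightarrow> continuous_map Omega_top euclideanreal f"

definition shift :: "omega \<Rightarrow> omega" where
  "shift x = (\<lambda>n. x (Suc n))"

definition cons_sym :: "bool \<Rightarrow> omega \<Rightarrow> omega" where
  "cons_sym a x = (\<lambda>n. case n of 0 \<Rightarrow> a | Suc m \<Rightarrow> x m)"

text \<open>Measure of maximal entropy: the (1/2,1/2) Bernoulli product measure.\<close>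
definition mu :: "omega measure" where
  "mu = PiM UNIV (\<lambda>_::nat. measure_pmf (bernoulli_pmf (1/2)))"

definition ruelle :: "(omega \<Rightarrow> real) \<Rightarrow> omega \<Rightarrow> real" where
  "ruelle g x = (g (cons_sym False x) + g (cons_sym True x)) / 2"

definition L2_mu :: "(omega \<Rightarrow> real) set" where
  "L2_mu = {g. g \<in> borel_measurable mu \<and> integrable mu (\<lambda>x. (g x)\<^sup>2)}"

definition L2_norm :: "(omega \<Rightarrow> real) \<Rightarrow> real" where
  "L2_norm g = sqrt (\<integral>x. (g x)\<^sup>2 \<partial>mu)"

definition sup_norm :: "(omega \<Rightarrow> real) \<Rightarrow> real" where
  "sup_norm f = (SUP x. \<bar>f x\<bar>)"

end

theory Submission
  imports Defs
begin

text \<open>The Koopman operator is the adjoint of the Ruelle operator: splitting \<open>mu\<close> as a fair coin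
  for the first symbol times \<open>mu\<close> for the tail gives
  \<open>\<integral> F \<cdot> (h \<circ> shift) = \<integral> ruelle F \<cdot> h\<close> for bounded \<open>F\<close> and integrable \<open>h\<close>.
  With \<open>F = f\<^sup>2\<close> and \<open>h = g\<^sup>2\<close> this reads
  \<open>\<parallel>f \<cdot> (g \<circ> shift)\<parallel>\<^sup>2 = \<integral> ruelle (f\<^sup>2) \<cdot> g\<^sup>2\<close>.
  Since \<open>ruelle (f\<^sup>2) \<le> \<parallel>f\<parallel>\<^sub>\<infinity>\<^sup>2\<close>, the supremum over unit vectors \<open>g\<close> is at most \<open>\<parallel>f\<parallel>\<^sub>\<infinity>\<close>.
  Conversely, letting \<open>g\<^sup>2\<close> be a normalised indicator of a small cylinder around \<open>x\<close>, on which
  the continuous function \<open>ruelle (f\<^sup>2)\<close> is almost constant, shows that the squared supremum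
  dominates \<open>ruelle (f\<^sup>2) x \<ge> (ruelle f x)\<^sup>2\<close>.
  If \<open>f\<close> ignores the first symbol then \<open>ruelle f (shift x) = f x\<close>, which closes the chain.\<close>

abbreviation coin :: "bool measure" where
  "coin \<equiv> measure_pmf (bernoulli_pmf (1/2))"

lemma space_mu [simp]: "space mu = UNIV"
  by (simp add: mu_def space_PiM)

lemma prob_space_mu: "prob_space mu"
  unfolding mu_def by (intro prob_space_PiM) (simp add: prob_space_measure_pmf)

lemma shift_cons_sym [simp]: "shift (cons_sym a x) = x"
  by (simp add: shift_def cons_sym_def)

lemma measurable_shift [measurable]: "shift \<in> mu \<rightarrow>\<^sub>M mu"
  unfolding mu_def shift_def by (intro measurable_PiM_single') (auto simp: space_PiM)

lemma measurable_cons_sym [measurable]: "(\<lambda>(a, x). cons_sym a x) \<in> coin \<Otimes>\<^sub>M mu \<rightarrow>\<^sub>M mu"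
proof -
  have "(\<lambda>p. cons_sym (fst p) (snd p) n) \<in> coin \<Otimes>\<^sub>M mu \<rightarrow>\<^sub>M coin" for n
    by (cases n) (simp_all add: cons_sym_def mu_def)
  then show ?thesis
    by (simp add: mu_def split_beta' measurable_PiM_single' space_PiM)
qed

lemma distr_cons_sym: "distr (coin \<Otimes>\<^sub>M mu) mu (\<lambda>(a, x). cons_sym a x) = mu"
proof -
  interpret sequence_space coin
    unfolding sequence_space_def by (rule product_prob_spaceI) (rule prob_space_measure_pmf)
  have "(\<lambda>(a, x). cons_sym a x) = (\<lambda>(a, x). case_nat a x)"
    by (auto simp: cons_sym_def fun_eq_iff)
  then show ?thesis
    using PiM_iter by (simp add: mu_def)
qed

lemma measurable_cons_sym_const [measurable]: "cons_sym a \<in> mu \<rightarrow>\<^sub>M mu"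
  using measurable_Pair2[OF measurable_cons_sym, of a] by simp

lemma measurable_ruelle [measurable]:
  assumes [measurable]: "F \<in> borel_measurable mu"
  shows "ruelle F \<in> borel_measurable mu"
  unfolding ruelle_def by measurable

definition cyl :: "bool list \<Rightarrow> omega set" where
  "cyl xs = {y. \<forall>i<length xs. y i = xs ! i}"

lemma mem_cyl_prefix: "y \<in> cyl (map x [0..<n]) \<longleftrightarrow> (\<forall>i<n. y i = x i)"
  by (simp add: cyl_def)

lemma cyl_eq_prod_emb:
  "cyl xs = prod_emb UNIV (\<lambda>_. coin) {..<length xs} (\<Pi>\<^sub>E i\<in>{..<length xs}. {xs ! i})"
  unfolding cyl_def by (rule set_eqI) (simp add: prod_emb_iff restrict_PiE_iff Pi_iff Ball_def)

lemma sets_cyl [measurable]: "cyl xs \<in> sets mu"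
  unfolding cyl_eq_prod_emb mu_def by (intro sets_PiM_I) auto

lemma measure_cyl: "measure mu (cyl xs) = (1/2) ^ length xs"
proof -
  have "emeasure mu (cyl xs) = (\<Prod>i<length xs. emeasure coin {xs ! i})"
    unfolding cyl_eq_prod_emb mu_def by (intro emeasure_PiM_emb) (auto simp: prob_space_measure_pmf)
  also have "\<dots> = ennreal ((1/2) ^ length xs)"
    by (simp add: emeasure_pmf_single prod_ennreal ennreal_power[symmetric])
  finally show ?thesis
    by (simp add: measure_def)
qed

lemma integrable_bounded_mult:
  fixes F h :: "'a \<Rightarrow> real"
  assumes "F \<in> borel_measurable M" "\<And>x. x \<in> space M \<Longrightarrow> \<bar>F x\<bar> \<le> B" "integrable M h"
  shows "integrable M (\<lambda>x. F x * h x)"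
proof (rule Bochner_Integration.integrable_bound)
  show "integrable M (\<lambda>x. B * h x)"
    using assms(3) by simp
  show "AE x in M. norm (F x * h x) \<le> norm (B * h x)"
    using assms(2) by (intro AE_I2) (simp add: abs_mult mult_right_mono order_trans[OF _ abs_ge_self])
qed (use assms in simp_all)

lemma integral_mult_shift_eq_ruelle:
  fixes F h :: "omega \<Rightarrow> real"
  assumes F [measurable]: "F \<in> borel_measurable mu" and F_bound: "\<And>x. \<bar>F x\<bar> \<le> B"
    and h: "integrable mu h"
  shows "(\<integral>x. F x * h (shift x) \<partial>mu) = (\<integral>x. ruelle F x * h x \<partial>mu)"
proof -
  interpret pair_sigma_finite coin mu
    by (intro pair_sigma_finite.intro prob_space_imp_sigma_finite prob_space_measure_pmf prob_space_mu)
  have slice: "integrable mu (\<lambda>x. F (cons_sym a x) * h x)" for a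
    using h F_bound by (intro integrable_bounded_mult) auto
  have pair: "integrable (coin \<Otimes>\<^sub>M mu) (\<lambda>(a, x). F (cons_sym a x) * h x)"
    using h by (intro Fubini_integrable) (auto simp: slice integrable_measure_pmf_finite split_beta')
  have "(\<integral>x. F x * h (shift x) \<partial>mu) = (\<integral>(a, x). F (cons_sym a x) * h x \<partial>(coin \<Otimes>\<^sub>M mu))"
    using h by (subst distr_cons_sym[symmetric], subst integral_distr) (auto simp: split_beta')
  also have "\<dots> = (\<integral>a. (\<integral>x. F (cons_sym a x) * h x \<partial>mu) \<partial>coin)"
    using integral_fst'[OF pair] by (simp add: split_beta')
  also have "\<dots> = ((\<integral>x. F (cons_sym False x) * h x \<partial>mu) + (\<integral>x. F (cons_sym True x) * h x \<partial>mu)) / 2"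
    by (subst integral_measure_pmf_real[where A = UNIV]) (auto simp: UNIV_bool)
  also have "\<dots> = (\<integral>x. ruelle F x * h x \<partial>mu)"
    using slice by (simp add: ruelle_def add_divide_distrib distrib_right)
  finally show ?thesis .
qed

lemma L2_norm_nonneg: "0 \<le> L2_norm g"
  by (simp add: L2_norm_def)

lemma L2_norm_square: "(L2_norm g)\<^sup>2 = (\<integral>x. (g x)\<^sup>2 \<partial>mu)"
  by (simp add: L2_norm_def integral_nonneg_AE)

definition normalized_indicator :: "omega set \<Rightarrow> omega \<Rightarrow> real" where
  "normalized_indicator A x = indicator A x / sqrt (measure mu A)"

lemma normalized_indicator_square: "(normalized_indicator A x)\<^sup>2 = indicator A x / measure mu A"
  by (simp add: normalized_indicator_def power_divide indicator_def)

lemma normalized_indicator_unit: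
  assumes A: "A \<in> sets mu" and pos: "measure mu A > 0"
  shows "normalized_indicator A \<in> L2_mu" and "L2_norm (normalized_indicator A) = 1"
proof -
  interpret mu: prob_space mu by (rule prob_space_mu)
  have int: "integrable mu (indicator A :: omega \<Rightarrow> real)"
    using A by (simp add: mu.emeasure_finite less_top[symmetric])
  have "normalized_indicator A \<in> borel_measurable mu"
    using A unfolding normalized_indicator_def by measurable
  then show "normalized_indicator A \<in> L2_mu"
    using int by (simp add: L2_mu_def normalized_indicator_square)
  have "(\<integral>x. (normalized_indicator A x)\<^sup>2 \<partial>mu) = 1"
    using A pos by (simp add: normalized_indicator_square)
  then show "L2_norm (normalized_indicator A) = 1"
    by (simp add: L2_norm_def)
qed

lemma topspace_Omega_top [simp]: "topspace Omega_top = UNIV"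
  by (simp add: Omega_top_def)

lemma cont_Omega_cyl_subset:
  assumes f: "cont_Omega f" and S: "open S" "f x \<in> S"
  obtains n where "cyl (map x [0..<n]) \<subseteq> f -` S"
proof -
  have "openin Omega_top {y \<in> topspace Omega_top. f y \<in> S}"
    using f S by (intro openin_continuous_map_preimage[of _ euclideanreal]) (auto simp: cont_Omega_def)
  then have "openin Omega_top {y. f y \<in> S}"
    by simp
  then obtain U where U: "finite {i. U i \<noteq> UNIV}" "x \<in> Pi\<^sub>E UNIV U" "Pi\<^sub>E UNIV U \<subseteq> {y. f y \<in> S}"
    using S(2) unfolding Omega_top_def openin_product_topology_alt by fastforce
  obtain n where n: "{i. U i \<noteq> UNIV} \<subseteq> {..<n}"
    using finite_nat_bounded[OF U(1)] by blast
  have "cyl (map x [0..<n]) \<subseteq> Pi\<^sub>E UNIV U"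
  proof
    fix y
    assume y: "y \<in> cyl (map x [0..<n])"
    have "y i \<in> U i" for i
    proof (cases "i < n")
      case True
      then show ?thesis
        using y U(2) by (auto simp: mem_cyl_prefix)
    next
      case False
      then show ?thesis
        using n by (auto simp: subset_eq)
    qed
    then show "y \<in> Pi\<^sub>E UNIV U"
      by (simp add: PiE_iff)
  qed
  with U(3) have "cyl (map x [0..<n]) \<subseteq> f -` S"
    by auto
  then show thesis
    by (rule that)
qed

lemma cont_Omega_near_on_cyl:
  assumes "cont_Omega f" "e > 0"
  obtains n where "\<And>y. y \<in> cyl (map x [0..<n]) \<Longrightarrow> \<bar>f y - f x\<bar> < e"
proof -
  obtain n where n: "cyl (map x [0..<n]) \<subseteq> f -` ball (f x) e"
    by (rule cont_Omega_cyl_subset[OF assms(1), of "ball (f x) e"]) (use assms(2) in auto)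
  show thesis
  proof (rule that)
    fix y
    assume "y \<in> cyl (map x [0..<n])"
    with n have "f y \<in> ball (f x) e"
      by blast
    then show "\<bar>f y - f x\<bar> < e"
      by (simp add: dist_real_def abs_minus_commute)
  qed
qed

lemma borel_measurable_cont_Omega [measurable]:
  assumes f: "cont_Omega f"
  shows "f \<in> borel_measurable mu"
proof (rule borel_measurableI)
  fix S :: "real set"
  assume S: "open S"
  define W where "W = {xs. cyl xs \<subseteq> f -` S}"
  have "f -` S = \<Union> (cyl ` W)"
  proof
    show "f -` S \<subseteq> \<Union> (cyl ` W)"
    proof
      fix x
      assume "x \<in> f -` S"
      then obtain n where "cyl (map x [0..<n]) \<subseteq> f -` S"
        using cont_Omega_cyl_subset[OF f S] by blast
      then show "x \<in> \<Union> (cyl ` W)"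
        unfolding W_def by (intro UN_I[of "map x [0..<n]"]) (auto simp: mem_cyl_prefix)
    qed
  qed (auto simp: W_def)
  moreover have "\<Union> (cyl ` W) \<in> sets mu"
    by (intro sets.countable_Union countable_image) (auto intro: countableI_type)
  ultimately show "f -` S \<inter> space mu \<in> sets mu"
    by simp
qed

lemma bdd_above_abs_cont_Omega:
  assumes "cont_Omega f"
  shows "bdd_above (range (\<lambda>x. \<bar>f x\<bar>))"
proof -
  have "compact_space Omega_top"
    unfolding Omega_top_def by (simp add: compact_space_product_topology compact_space_discrete_topology)
  then have "compactin euclideanreal (range f)"
    using image_compactin[of Omega_top UNIV euclideanreal f] assms
    by (simp add: cont_Omega_def compact_space_def)
  then have "bounded (range f)"
    by (simp add: compact_imp_bounded)
  then show ?thesis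
    by (auto simp: bounded_iff bdd_above_def)
qed

lemma continuous_map_cons_sym: "continuous_map Omega_top Omega_top (cons_sym a)"
  unfolding Omega_top_def continuous_map_componentwise_UNIV
proof
  fix k
  show "continuous_map (product_topology (\<lambda>_. discrete_topology UNIV) UNIV) (discrete_topology UNIV)
          (\<lambda>x. cons_sym a x k)"
    using continuous_map_product_projection[of "k - 1" UNIV "\<lambda>_. discrete_topology UNIV"]
    by (cases k) (simp_all add: cons_sym_def)
qed

lemma cont_Omega_ruelle: "cont_Omega F \<Longrightarrow> cont_Omega (ruelle F)"
  unfolding cont_Omega_def ruelle_def
  by (intro continuous_map_real_divide continuous_map_add continuous_map_const[THEN iffD2]
      continuous_map_compose[OF continuous_map_cons_sym, unfolded o_def]) auto

lemma cont_Omega_square: "cont_Omega f \<Longrightarrow> cont_Omega (\<lambda>x. (f x)\<^sup>2)"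
  unfolding cont_Omega_def by (rule continuous_map_real_pow)

lemma ruelle_square_le: "(ruelle f x)\<^sup>2 \<le> ruelle (\<lambda>y. (f y)\<^sup>2) x"
proof -
  have "0 \<le> (f (cons_sym False x) - f (cons_sym True x))\<^sup>2"
    by simp
  then show ?thesis
    unfolding ruelle_def by (simp add: power2_eq_square field_simps)
qed

lemma ruelle_abs_le:
  assumes "\<And>x. \<bar>f x\<bar> \<le> B"
  shows "\<bar>ruelle f x\<bar> \<le> B"
  using assms[of "cons_sym False x"] assms[of "cons_sym True x"]
  unfolding ruelle_def by (auto simp: abs_le_iff field_simps)

lemma ruelle_shift:
  assumes "\<forall>x y. (\<forall>n. x (Suc n) = y (Suc n)) \<longrightarrow> f x = f y"
  shows "ruelle f (shift x) = f x"
proof -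
  have "f (cons_sym a (shift x)) = f x" for a
    by (rule assms[rule_format]) (simp add: cons_sym_def shift_def)
  then show ?thesis
    by (simp add: ruelle_def)
qed

lemma abs_ruelle_square_le:
  assumes "\<And>x. \<bar>f x\<bar> \<le> B"
  shows "\<bar>ruelle (\<lambda>y. (f y)\<^sup>2) x\<bar> \<le> B\<^sup>2"
proof (rule ruelle_abs_le)
  show "\<bar>(f y)\<^sup>2\<bar> \<le> B\<^sup>2" for y
    using power_mono[OF assms[of y] abs_ge_zero, of 2] by simp
qed

lemma abs_le_sup_norm: "bdd_above (range (\<lambda>x. \<bar>f x\<bar>)) \<Longrightarrow> \<bar>f x\<bar> \<le> sup_norm f"
  unfolding sup_norm_def by (rule cSUP_upper) auto

lemma sup_norm_le: "(\<And>x. \<bar>f x\<bar> \<le> M) \<Longrightarrow> sup_norm f \<le> M"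
  unfolding sup_norm_def by (rule cSUP_least) auto

lemma L2_norm_mult_shift_square:
  assumes f: "f \<in> borel_measurable mu" "\<And>x. \<bar>f x\<bar> \<le> B" and g: "g \<in> L2_mu"
  shows "(L2_norm (\<lambda>x. f x * g (shift x)))\<^sup>2 = (\<integral>x. ruelle (\<lambda>y. (f y)\<^sup>2) x * (g x)\<^sup>2 \<partial>mu)"
proof -
  have "\<bar>(f x)\<^sup>2\<bar> \<le> B\<^sup>2" for x
    using power_mono[OF f(2) abs_ge_zero, of x 2] by simp
  then have "(\<integral>x. (f x)\<^sup>2 * (g (shift x))\<^sup>2 \<partial>mu) = (\<integral>x. ruelle (\<lambda>y. (f y)\<^sup>2) x * (g x)\<^sup>2 \<partial>mu)"
    using f(1) g by (intro integral_mult_shift_eq_ruelle[where B = "B\<^sup>2"]) (auto simp: L2_mu_def)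
  then show ?thesis
    by (simp add: L2_norm_square power_mult_distrib)
qed

lemma L2_norm_mult_shift_le:
  assumes f [measurable]: "f \<in> borel_measurable mu" and f_bound: "\<And>x. \<bar>f x\<bar> \<le> M"
    and g: "g \<in> L2_mu"
  shows "L2_norm (\<lambda>x. f x * g (shift x)) \<le> M * L2_norm g"
proof -
  have M: "0 \<le> M"
    using abs_ge_zero[of "f undefined"] f_bound[of undefined] by linarith
  note ruelle_bound = abs_ruelle_square_le[OF f_bound]
  have g2: "integrable mu (\<lambda>x. (g x)\<^sup>2)"
    using g by (simp add: L2_mu_def)
  have "(L2_norm (\<lambda>x. f x * g (shift x)))\<^sup>2 = (\<integral>x. ruelle (\<lambda>y. (f y)\<^sup>2) x * (g x)\<^sup>2 \<partial>mu)"
    using f f_bound g by (rule L2_norm_mult_shift_square)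
  also have "\<dots> \<le> (\<integral>x. M\<^sup>2 * (g x)\<^sup>2 \<partial>mu)"
  proof (rule integral_mono)
    show "integrable mu (\<lambda>x. ruelle (\<lambda>y. (f y)\<^sup>2) x * (g x)\<^sup>2)"
      by (rule integrable_bounded_mult[OF measurable_ruelle ruelle_bound g2]) simp
    show "integrable mu (\<lambda>x. M\<^sup>2 * (g x)\<^sup>2)"
      using g2 by (rule integrable_mult_right)
    show "ruelle (\<lambda>y. (f y)\<^sup>2) x * (g x)\<^sup>2 \<le> M\<^sup>2 * (g x)\<^sup>2" for x
      using abs_le_D1[OF ruelle_bound] by (intro mult_right_mono) simp_all
  qed
  also have "\<dots> = (M * L2_norm g)\<^sup>2"
    by (simp add: L2_norm_square power_mult_distrib)
  finally have "(L2_norm (\<lambda>x. f x * g (shift x)))\<^sup>2 \<le> (M * L2_norm g)\<^sup>2" .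
  moreover have "0 \<le> M * L2_norm g"
    using M L2_norm_nonneg by simp
  ultimately show ?thesis
    by (rule power2_le_imp_le)
qed

lemma L2_norm_mult_shift_ge:
  assumes f: "cont_Omega f" and \<eta>: "\<eta> > 0"
  obtains g where "g \<in> L2_mu" "L2_norm g = 1"
    "ruelle (\<lambda>y. (f y)\<^sup>2) x - \<eta> \<le> (L2_norm (\<lambda>y. f y * g (shift y)))\<^sup>2"
proof -
  let ?G = "ruelle (\<lambda>y. (f y)\<^sup>2)"
  obtain n where near: "\<And>y. y \<in> cyl (map x [0..<n]) \<Longrightarrow> \<bar>?G y - ?G x\<bar> < \<eta>"
    using cont_Omega_near_on_cyl[OF cont_Omega_ruelle[OF cont_Omega_square[OF f]] \<eta>] by blast
  define C where "C = cyl (map x [0..<n])"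
  have C: "C \<in> sets mu" "measure mu C > 0"
    by (simp_all add: C_def measure_cyl)
  define g where "g = normalized_indicator C"
  have g: "g \<in> L2_mu" "L2_norm g = 1"
    unfolding g_def using normalized_indicator_unit[OF C] by auto
  have g2: "integrable mu (\<lambda>y. (g y)\<^sup>2)"
    using g by (simp add: L2_mu_def)
  obtain B where B: "\<And>y. \<bar>f y\<bar> \<le> B"
    using bdd_above_abs_cont_Omega[OF f] by (auto simp: bdd_above_def)
  have "?G x - \<eta> = (\<integral>y. (?G x - \<eta>) * (g y)\<^sup>2 \<partial>mu)"
    using g L2_norm_square[of g] by simp
  also have "\<dots> \<le> (\<integral>y. ?G y * (g y)\<^sup>2 \<partial>mu)"
  proof (rule integral_mono)
    show "integrable mu (\<lambda>y. ?G y * (g y)\<^sup>2)"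
      using f abs_ruelle_square_le[OF B] by (intro integrable_bounded_mult[OF _ _ g2]) auto
    show "(?G x - \<eta>) * (g y)\<^sup>2 \<le> ?G y * (g y)\<^sup>2" for y
    proof (cases "y \<in> C")
      case True
      then have "?G x - \<eta> \<le> ?G y"
        using near[of y] by (simp add: C_def)
      then show ?thesis
        by (rule mult_right_mono) simp
    qed (simp add: g_def normalized_indicator_square)
  qed (use g2 in simp)
  also have "\<dots> = (L2_norm (\<lambda>y. f y * g (shift y)))\<^sup>2"
    using B f g by (intro L2_norm_mult_shift_square[symmetric]) auto
  finally show thesis
    using that g by blast
qed

lemma L2_norm_mult_shift_le_sup_norm:
  assumes f: "cont_Omega f" and g: "g \<in> L2_mu" "L2_norm g = 1"
  shows "L2_norm (\<lambda>x. f x * g (shift x)) \<le> sup_norm f"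
  using L2_norm_mult_shift_le[OF borel_measurable_cont_Omega[OF f]
      abs_le_sup_norm[OF bdd_above_abs_cont_Omega[OF f]] g(1)] g(2)
  by simp

definition norm_mult_koopman :: "(omega \<Rightarrow> real) \<Rightarrow> real" where
  "norm_mult_koopman f = (SUP g\<in>{g\<in>L2_mu. L2_norm g = 1}. L2_norm (\<lambda>x. f x * g (shift x)))"

lemma unit_sphere_nonempty: "{g\<in>L2_mu. L2_norm g = 1} \<noteq> {}"
proof -
  have "UNIV \<in> sets mu"
    using sets.top[of mu] by simp
  moreover have "measure mu UNIV = 1"
    using prob_space.prob_space[OF prob_space_mu] by simp
  ultimately show ?thesis
    using normalized_indicator_unit[of UNIV] by auto
qed

lemma norm_mult_koopman_le_sup_norm:
  assumes f: "cont_Omega f"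
  shows "norm_mult_koopman f \<le> sup_norm f"
  unfolding norm_mult_koopman_def
  by (rule cSUP_least[OF unit_sphere_nonempty]) (simp add: L2_norm_mult_shift_le_sup_norm[OF f])

lemma L2_norm_mult_shift_le_norm_mult_koopman:
  assumes f: "cont_Omega f" and g: "g \<in> L2_mu" "L2_norm g = 1"
  shows "L2_norm (\<lambda>x. f x * g (shift x)) \<le> norm_mult_koopman f"
  unfolding norm_mult_koopman_def
proof (rule cSUP_upper)
  show "bdd_above ((\<lambda>g. L2_norm (\<lambda>x. f x * g (shift x))) ` {g\<in>L2_mu. L2_norm g = 1})"
    by (rule bdd_aboveI2[where M = "sup_norm f"]) (simp add: L2_norm_mult_shift_le_sup_norm[OF f])
qed (use g in simp)

lemma sup_norm_ruelle_le_norm_mult_koopman: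
  assumes f: "cont_Omega f"
  shows "sup_norm (ruelle f) \<le> norm_mult_koopman f"
proof (rule sup_norm_le)
  fix x
  let ?s = "norm_mult_koopman f"
  obtain g0 where "g0 \<in> L2_mu" "L2_norm g0 = 1"
    using unit_sphere_nonempty by blast
  then have s: "0 \<le> ?s"
    using order_trans[OF L2_norm_nonneg L2_norm_mult_shift_le_norm_mult_koopman[OF f]] by blast
  have "ruelle (\<lambda>y. (f y)\<^sup>2) x \<le> ?s\<^sup>2"
  proof (rule field_le_epsilon)
    fix \<eta> :: real
    assume "0 < \<eta>"
    then obtain g where g: "g \<in> L2_mu" "L2_norm g = 1"
      and near: "ruelle (\<lambda>y. (f y)\<^sup>2) x - \<eta> \<le> (L2_norm (\<lambda>y. f y * g (shift y)))\<^sup>2"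
      by (rule L2_norm_mult_shift_ge[OF f])
    have "(L2_norm (\<lambda>y. f y * g (shift y)))\<^sup>2 \<le> ?s\<^sup>2"
      by (rule power_mono[OF L2_norm_mult_shift_le_norm_mult_koopman[OF f g] L2_norm_nonneg])
    with near show "ruelle (\<lambda>y. (f y)\<^sup>2) x \<le> ?s\<^sup>2 + \<eta>"
      by linarith
  qed
  then have "\<bar>ruelle f x\<bar>\<^sup>2 \<le> ?s\<^sup>2"
    using ruelle_square_le[of f x] by simp
  then show "\<bar>ruelle f x\<bar> \<le> ?s"
    using s by (rule power2_le_imp_le)
qed

lemma sup_norm_le_sup_norm_ruelle:
  assumes f_bound: "\<And>x. \<bar>f x\<bar> \<le> B"
    and tail: "\<forall>x y. (\<forall>n. x (Suc n) = y (Suc n)) \<longrightarrow> f x = f y"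
  shows "sup_norm f \<le> sup_norm (ruelle f)"
proof (rule sup_norm_le)
  fix x
  have "bdd_above (range (\<lambda>x. \<bar>ruelle f x\<bar>))"
    using ruelle_abs_le[OF f_bound] by (intro bdd_aboveI2)
  then show "\<bar>f x\<bar> \<le> sup_norm (ruelle f)"
    using abs_le_sup_norm[of "ruelle f" "shift x"] by (simp add: ruelle_shift[OF tail])
qed

theorem lemma2p14:
  fixes f :: "omega \<Rightarrow> real"
  assumes "cont_Omega f"
  shows "sup_norm f \<ge> (SUP g\<in>{g\<in>L2_mu. L2_norm g = 1}. L2_norm (\<lambda>x. f x * g (shift x)))
         \<and> (SUP g\<in>{g\<in>L2_mu. L2_norm g = 1}. L2_norm (\<lambda>x. f x * g (shift x))) \<ge> sup_norm (ruelle f)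
         \<and> ((\<forall>x y. (\<forall>n. x (Suc n) = y (Suc n)) \<longrightarrow> f x = f y) \<longrightarrow>
              sup_norm f = (SUP g\<in>{g\<in>L2_mu. L2_norm g = 1}. L2_norm (\<lambda>x. f x * g (shift x)))
            \<and> (SUP g\<in>{g\<in>L2_mu. L2_norm g = 1}. L2_norm (\<lambda>x. f x * g (shift x))) = sup_norm (ruelle f))"
proof -
  have upper: "norm_mult_koopman f \<le> sup_norm f"
    using assms by (rule norm_mult_koopman_le_sup_norm)
  have lower: "sup_norm (ruelle f) \<le> norm_mult_koopman f"
    using assms by (rule sup_norm_ruelle_le_norm_mult_koopman)
  have "sup_norm f \<le> sup_norm (ruelle f)"
    if "\<forall>x y. (\<forall>n. x (Suc n) = y (Suc n)) \<longrightarrow> f x = f y"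
    using abs_le_sup_norm[OF bdd_above_abs_cont_Omega[OF assms]] that
    by (rule sup_norm_le_sup_norm_ruelle)
  with upper lower show ?thesis
    unfolding norm_mult_koopman_def by auto
qed

end
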